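(* Let $n \geq 2$ be a natural number. The following conditions are equivalent: (a) $\lfloor \sqrt{2}\,n \rfloor$ is even. (b) $\left\{ \frac{n}{\sqrt{2}} \right\} \leq \frac{1}{2}$. (c) $\left\{ \frac{n}{\sqrt{2}} \right\} < \frac{1}{2}$. (d) $\left\lfloor \sqrt{2}\,n \left\lfloor \frac{n}{\sqrt{2}} \right\rfloor \right\rfloor = \left\lfloor \frac{n}{\sqrt{2}} \lfloor \sqrt{2}\,n \rfloor \right\rfloor$. (e) $\left\lfloor \frac{n}{\sqrt{2}} \right\rfloor = \left\lfloor \sqrt{ n^2 - \left\lfloor \frac{n}{\sqrt{2}} \right\rfloor^2 } \right\rfloor$. (f) $\left\{ \frac{n}{\sqrt{2}} \right\} < \sqrt{ \left\lfloor \frac{n}{\sqrt{2}} \right\rfloor^2 + \left\lfloor \frac{n}{\sqrt{2}} \right\rfloor + \frac{1}{2} } - \left\lfloor \frac{n}{\sqrt{2}} \right\rfloor$.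
   Context: $\lfloor x \rfloor$ denotes the floor of a real number $x$ and $\{x\} = x - \lfloor x \rfloor$ denotes its fractional part. *)

theory Defs
  imports Complex_Main
begin

end

theory Submission
  imports Defs
begin

text \<open>Put \<open>x = n / sqrt 2\<close> and \<open>m = \<lfloor>x\<rfloor>\<close>, so that \<open>sqrt 2 * n = 2 * x\<close> and \<open>n\<^sup>2 = 2 * x\<^sup>2\<close>.
  Since \<open>\<lfloor>2 * x\<rfloor>\<close> is \<open>2 * m\<close> or \<open>2 * m + 1\<close> according as \<open>frac x < 1/2\<close> or not, (a) and,
  because \<open>x \<ge> 1\<close>, also (d) are equivalent to (c); (e) and (f) are rearrangements of
  \<open>x\<^sup>2 < m\<^sup>2 + m + 1/2\<close>.  As \<open>2 * x\<^sup>2\<close> is an integer but \<open>2 * (m + 1/2)\<^sup>2 = 2 * m\<^sup>2 + 2 * m + 1/2\<close>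
  is not, \<open>frac x \<noteq> 1/2\<close>, which gives (b), and \<open>x\<^sup>2\<close> cannot lie between \<open>(m + 1/2)\<^sup>2\<close> and
  \<open>m\<^sup>2 + m + 1/2\<close>, which links (e) and (f) to (c).\<close>

lemma floor_double:
  fixes x :: real
  shows "\<lfloor>2 * x\<rfloor> = 2 * \<lfloor>x\<rfloor> + (if frac x < 1/2 then 0 else 1)"
  unfolding frac_def by (auto intro!: floor_unique) linarith+

lemma even_floor_double_iff:
  fixes x :: real
  shows "even \<lfloor>2 * x\<rfloor> \<longleftrightarrow> frac x < 1/2"
  by (simp add: floor_double)

lemma floor_double_times_floor_eq_iff:
  fixes x :: real
  assumes "1 \<le> x"
  shows "\<lfloor>2 * x * of_int \<lfloor>x\<rfloor>\<rfloor> = \<lfloor>x * of_int \<lfloor>2 * x\<rfloor>\<rfloor> \<longleftrightarrow> frac x < 1/2"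
proof (cases "frac x < 1/2")
  case False
  then have "\<lfloor>2 * x\<rfloor> = 2 * \<lfloor>x\<rfloor> + 1"
    by (simp add: floor_double)
  then have "x * of_int \<lfloor>2 * x\<rfloor> = 2 * x * of_int \<lfloor>x\<rfloor> + x"
    by (simp add: algebra_simps)
  then have "\<lfloor>2 * x * of_int \<lfloor>x\<rfloor>\<rfloor> < \<lfloor>x * of_int \<lfloor>2 * x\<rfloor>\<rfloor>"
    using assms by linarith
  then show ?thesis
    using False by simp
next
  case True
  then have "\<lfloor>2 * x\<rfloor> = 2 * \<lfloor>x\<rfloor>"
    by (simp add: floor_double)
  then show ?thesis
    using True by (simp add: ac_simps)
qed

lemma less_sqrt_iff_square_less:
  fixes x y :: real
  assumes "0 \<le> x"
  shows "x < sqrt y \<longleftrightarrow> x\<^sup>2 < y"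
  using assms real_sqrt_less_iff[of "x\<^sup>2" y] by simp

lemma sqrt_less_iff_less_square:
  fixes a y :: real
  assumes "0 \<le> a"
  shows "sqrt y < a \<longleftrightarrow> y < a\<^sup>2"
  using assms real_sqrt_less_iff[of y "a\<^sup>2"] by simp

lemma frac_less_sqrt_diff_floor_iff:
  fixes x :: real
  assumes "0 \<le> x"
  shows "frac x < sqrt ((of_int \<lfloor>x\<rfloor>)\<^sup>2 + of_int \<lfloor>x\<rfloor> + 1/2) - of_int \<lfloor>x\<rfloor>
    \<longleftrightarrow> x\<^sup>2 < (of_int \<lfloor>x\<rfloor>)\<^sup>2 + of_int \<lfloor>x\<rfloor> + 1/2"
  using less_sqrt_iff_square_less[OF assms] by (simp add: frac_def)

lemma floor_eq_floor_sqrt_iff: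
  fixes x :: real
  assumes "0 \<le> x"
  shows "\<lfloor>x\<rfloor> = \<lfloor>sqrt (2 * x\<^sup>2 - (of_int \<lfloor>x\<rfloor>)\<^sup>2)\<rfloor>
    \<longleftrightarrow> x\<^sup>2 < (of_int \<lfloor>x\<rfloor>)\<^sup>2 + of_int \<lfloor>x\<rfloor> + 1/2"
proof -
  define m where "m = \<lfloor>x\<rfloor>"
  have "0 \<le> m"
    using assms by (simp add: m_def)
  have "(of_int m)\<^sup>2 \<le> x\<^sup>2"
    using \<open>0 \<le> m\<close> by (intro power_mono) (simp_all add: m_def)
  then have "of_int m \<le> sqrt (2 * x\<^sup>2 - (of_int m)\<^sup>2)"
    using \<open>0 \<le> m\<close> by (intro real_le_rsqrt) simp
  then have "m = \<lfloor>sqrt (2 * x\<^sup>2 - (of_int m)\<^sup>2)\<rfloor> \<longleftrightarrow> sqrt (2 * x\<^sup>2 - (of_int m)\<^sup>2) < of_int m + 1"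
    by (metis floor_eq_iff)
  also have "\<dots> \<longleftrightarrow> 2 * x\<^sup>2 - (of_int m)\<^sup>2 < (of_int m + 1)\<^sup>2"
    using \<open>0 \<le> m\<close> by (simp add: sqrt_less_iff_less_square)
  also have "\<dots> \<longleftrightarrow> x\<^sup>2 < (of_int m)\<^sup>2 + of_int m + 1/2"
    by (simp add: power2_sum) linarith
  finally show ?thesis
    by (simp add: m_def)
qed

lemma frac_neq_half_if_double_square_int:
  fixes x :: real
  assumes "2 * x\<^sup>2 \<in> \<int>"
  shows "frac x \<noteq> 1/2"
proof
  assume "frac x = 1/2"
  then have "x = of_int \<lfloor>x\<rfloor> + 1/2"
    by (simp add: frac_def)
  then obtain m where "x = of_int m + 1/2"
    by blast
  then have "2 * x\<^sup>2 - of_int (2 * m\<^sup>2 + 2 * m) = 1/2"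
    by (simp add: power2_eq_square algebra_simps)
  moreover have "2 * x\<^sup>2 - of_int (2 * m\<^sup>2 + 2 * m) \<in> \<int>"
    using assms by simp
  ultimately have "frac (1/2 :: real) = 0"
    by (metis frac_eq_0_iff)
  then show False
    by simp
qed

lemma square_less_iff_frac_less_half:
  fixes x :: real
  assumes "0 \<le> x" and "2 * x\<^sup>2 \<in> \<int>"
  shows "x\<^sup>2 < (of_int \<lfloor>x\<rfloor>)\<^sup>2 + of_int \<lfloor>x\<rfloor> + 1/2 \<longleftrightarrow> frac x < 1/2"
proof
  assume "frac x < 1/2"
  then have "x\<^sup>2 < (of_int \<lfloor>x\<rfloor> + 1/2)\<^sup>2"
    using assms(1) by (intro power_strict_mono) (simp_all add: frac_def)
  then show "x\<^sup>2 < (of_int \<lfloor>x\<rfloor>)\<^sup>2 + of_int \<lfloor>x\<rfloor> + 1/2"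
    by (simp add: power2_eq_square algebra_simps)
next
  assume less: "x\<^sup>2 < (of_int \<lfloor>x\<rfloor>)\<^sup>2 + of_int \<lfloor>x\<rfloor> + 1/2"
  obtain k where k: "2 * x\<^sup>2 = of_int k"
    using assms(2) Ints_cases by metis
  show "frac x < 1/2"
  proof (rule ccontr)
    assume "\<not> frac x < 1/2"
    then have "(of_int \<lfloor>x\<rfloor> + 1/2)\<^sup>2 \<le> x\<^sup>2"
      using assms(1) by (intro power_mono) (simp_all add: frac_def)
    then have "of_int (2 * \<lfloor>x\<rfloor>\<^sup>2 + 2 * \<lfloor>x\<rfloor>) < (of_int k :: real)"
      and "of_int k < (of_int (2 * \<lfloor>x\<rfloor>\<^sup>2 + 2 * \<lfloor>x\<rfloor> + 1) :: real)"
      using less unfolding k[symmetric] by (simp_all add: power2_eq_square algebra_simps)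
    then show False
      unfolding of_int_less_iff by linarith
  qed
qed

theorem theorem1:
  fixes n :: nat
  assumes "n \<ge> 2"
  defines "A \<equiv> even \<lfloor>sqrt 2 * real n\<rfloor>"
    and "B \<equiv> frac (real n / sqrt 2) \<le> 1/2"
    and "C \<equiv> frac (real n / sqrt 2) < 1/2"
    and "D \<equiv> \<lfloor>sqrt 2 * real n * of_int \<lfloor>real n / sqrt 2\<rfloor>\<rfloor>
              = \<lfloor>real n / sqrt 2 * of_int \<lfloor>sqrt 2 * real n\<rfloor>\<rfloor>"
    and "E \<equiv> \<lfloor>real n / sqrt 2\<rfloor>
              = \<lfloor>sqrt ((real n)\<^sup>2 - (of_int \<lfloor>real n / sqrt 2\<rfloor>)\<^sup>2)\<rfloor>"
    and "F \<equiv> frac (real n / sqrt 2)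
              < sqrt ((of_int \<lfloor>real n / sqrt 2\<rfloor>)\<^sup>2 + of_int \<lfloor>real n / sqrt 2\<rfloor> + 1/2)
                - of_int \<lfloor>real n / sqrt 2\<rfloor>"
  shows "(A \<longleftrightarrow> B) \<and> (A \<longleftrightarrow> C) \<and> (A \<longleftrightarrow> D) \<and> (A \<longleftrightarrow> E) \<and> (A \<longleftrightarrow> F)"
proof -
  define x where "x = real n / sqrt 2"
  have double_x: "sqrt 2 * real n = 2 * x"
    by (simp add: x_def field_simps)
  have n_square: "(real n)\<^sup>2 = 2 * x\<^sup>2"
    by (simp add: x_def power_divide)
  have "sqrt 2 \<le> real n"
    using assms real_sqrt_le_mono[of 2 4] by simp
  then have "1 \<le> x"
    by (simp add: x_def)
  have "2 * x\<^sup>2 \<in> \<int>"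
    unfolding n_square[symmetric] by simp
  have "A \<longleftrightarrow> frac x < 1/2"
    by (simp add: A_def double_x even_floor_double_iff)
  moreover have "B \<longleftrightarrow> frac x < 1/2"
    using frac_neq_half_if_double_square_int[OF \<open>2 * x\<^sup>2 \<in> \<int>\<close>] by (auto simp: B_def x_def)
  moreover have "D \<longleftrightarrow> frac x < 1/2"
    using floor_double_times_floor_eq_iff[OF \<open>1 \<le> x\<close>]
    by (simp add: D_def double_x flip: x_def)
  moreover have "E \<longleftrightarrow> frac x < 1/2" "F \<longleftrightarrow> frac x < 1/2"
    using \<open>1 \<le> x\<close> square_less_iff_frac_less_half[OF _ \<open>2 * x\<^sup>2 \<in> \<int>\<close>]
      floor_eq_floor_sqrt_iff frac_less_sqrt_diff_floor_iff
    by (simp_all add: E_def F_def n_square flip: x_def)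
  ultimately show ?thesis
    by (simp add: C_def flip: x_def)
qed

end
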